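(* Every $\sigma$-scattered metrizable space is a $\Delta$-space.
   Context: A space is $\sigma$-scattered if it is a countable union of scattered subspaces (a space is scattered if every nonempty subset has a point isolated in that subset). A topological space $X$ is a $\Delta$-space if for every decreasing sequence $\{D_n:n\in\omega\}$ of subsets of $X$ with $\bigcap_n D_n=\emptyset$ there is a decreasing sequence $\{V_n:n\in\omega\}$ of open subsets of $X$ with $D_n\subseteq V_n$ for all $n$ and $\bigcap_n V_n=\emptyset$. *)

theory Defs
  imports "HOL-Analysis.Analysis"
begin

definition scattered_space :: "'a topology \<Rightarrow> bool" where
  "scattered_space X \<longleftrightarrow>
     (\<forall>T. T \<subseteq> topspace X \<and> T \<noteq> {} \<longrightarrow>
        (\<exists>x\<in>T. \<exists>U. openin X U \<and> U \<inter> T = {x}))"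

definition sigma_scattered :: "'a topology \<Rightarrow> bool" where
  "sigma_scattered X \<longleftrightarrow>
     (\<exists>A :: nat \<Rightarrow> 'a set. topspace X = (\<Union>n. A n) \<and>
        (\<forall>n. scattered_space (subtopology X (A n))))"

definition delta_space :: "'a topology \<Rightarrow> bool" where
  "delta_space X \<longleftrightarrow>
     (\<forall>D :: nat \<Rightarrow> 'a set.
        (\<forall>n. D n \<subseteq> topspace X) \<and> (\<forall>n. D (Suc n) \<subseteq> D n) \<and> (\<Inter>n. D n) = {} \<longrightarrow>
        (\<exists>V :: nat \<Rightarrow> 'a set. (\<forall>n. openin X (V n)) \<and> (\<forall>n. V (Suc n) \<subseteq> V n) \<and>
           (\<forall>n. D n \<subseteq> V n) \<and> (\<Inter>n. V n) = {}))"

end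

theory Submission
  imports Defs
begin

text \<open>
Repeatedly removing isolated points orders a scattered space by an antisymmetric relation R
in which every point x has a neighbourhood of R-predecessors. In a metric space this gives
radii \<rho> on each scattered piece such that two points lying within each other's radius
coincide, so a \<sigma>-scattered metric space is a countable union of uniformly discrete
sets T i. Assign to x the ball of half the separation of the first T i containing x, minus
the closed sets T l with l < i. A point y lies in this neighbourhood of at most one x from
each T i, and only for i not exceeding the index of y, so the assignment is point-finite.
For decreasing D n with empty intersection, the unions V n of the neighbourhoods of the
points of D n then have empty intersection too: the finitely many x whose neighbourhood
contains y all eventually leave D n.
\<close>

lemma scattered_space_antisym_nhds:
  assumes "scattered_space X"
  obtains R where "antisym R"
    and "\<And>x. x \<in> topspace X \<Longrightarrow> \<exists>U. openin X U \<and> x \<in> U \<and> U \<subseteq> {z. (z, x) \<in> R}"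
proof -
  \<comment> \<open>The points x with (x, x) \<in> R are those placed so far.\<close>
  define F where "F = {R. (\<forall>(z, x) \<in> R. (z, z) \<in> R) \<and> antisym R \<and>
      (\<forall>x. (x, x) \<in> R \<longrightarrow> (\<exists>U. openin X U \<and> x \<in> U \<and> U \<subseteq> {z. (z, x) \<in> R}))}"
  have "\<Union>C \<in> F" if "C \<in> chains F" for C
  proof -
    have "C \<subseteq> F" "chain\<^sub>\<subseteq> C" using that by (auto simp: chains_def)
    then have "antisym (\<Union>C)" by (intro chain_subset_antisym_Union) (auto simp: F_def)
    moreover have "(z, z) \<in> \<Union>C" if "(z, x) \<in> \<Union>C" for z x
      using that \<open>C \<subseteq> F\<close> unfolding F_def by fast
    moreover have "\<exists>U. openin X U \<and> x \<in> U \<and> U \<subseteq> {z. (z, x) \<in> \<Union>C}" if x: "(x, x) \<in> \<Union>C" for x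
    proof -
      obtain S where "S \<in> C" "(x, x) \<in> S" using x by blast
      then have "\<forall>x. (x, x) \<in> S \<longrightarrow> (\<exists>U. openin X U \<and> x \<in> U \<and> U \<subseteq> {z. (z, x) \<in> S})"
        using \<open>C \<subseteq> F\<close> unfolding F_def by auto
      with \<open>(x, x) \<in> S\<close> obtain U where "openin X U" "x \<in> U" "U \<subseteq> {z. (z, x) \<in> S}"
        by blast
      then show ?thesis using \<open>S \<in> C\<close> by blast
    qed
    ultimately show ?thesis unfolding F_def by blast
  qed
  then obtain R where "R \<in> F" and R_max: "\<And>S. S \<in> F \<Longrightarrow> R \<subseteq> S \<Longrightarrow> S = R"
    using Zorn_Lemma[of F] by blast
  then have R_left_refl: "\<And>z x. (z, x) \<in> R \<Longrightarrow> (z, z) \<in> R" and "antisym R"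
    and R_nhds: "\<And>x. (x, x) \<in> R \<Longrightarrow> \<exists>U. openin X U \<and> x \<in> U \<and> U \<subseteq> {z. (z, x) \<in> R}"
    unfolding F_def by auto
  define B where "B = {x. (x, x) \<in> R}"
  have "topspace X \<subseteq> B"
  proof (rule ccontr)
    assume "\<not> topspace X \<subseteq> B"
    then obtain x U where x: "x \<in> topspace X - B" and "openin X U" and U: "U \<inter> (topspace X - B) = {x}"
      using assms unfolding scattered_space_def by (metis Diff_eq_empty_iff Diff_subset)
    \<comment> \<open>Place the point x, isolated among the unplaced points, above all placed ones.\<close>
    define R' where "R' = R \<union> insert x B \<times> {x}"
    have "antisym R'"
      using \<open>antisym R\<close> x R_left_refl unfolding R'_def B_def antisym_def by auto
    moreover have "U \<subseteq> {z. (z, x) \<in> R'}"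
      using U openin_subset[OF \<open>openin X U\<close>] unfolding R'_def by auto
    then have "\<exists>U. openin X U \<and> w \<in> U \<and> U \<subseteq> {z. (z, w) \<in> R'}" if "(w, w) \<in> R'" for w
      using that R_nhds \<open>openin X U\<close> U unfolding R'_def B_def by auto
    ultimately have "R' \<in> F" using R_left_refl unfolding F_def R'_def B_def by auto
    then have "R' = R" using R_max unfolding R'_def by blast
    then show False using x unfolding R'_def B_def by blast
  qed
  then show ?thesis using that \<open>antisym R\<close> R_nhds unfolding B_def by blast
qed

lemma delta_space_if_point_finite_nhds:
  assumes nhds: "\<And>x. x \<in> topspace X \<Longrightarrow> openin X (U x) \<and> x \<in> U x"
    and point_finite: "\<And>y. y \<in> topspace X \<Longrightarrow> finite {x \<in> topspace X. y \<in> U x}"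
  shows "delta_space X"
  unfolding delta_space_def
proof (intro allI impI)
  fix D :: "nat \<Rightarrow> 'a set"
  assume "(\<forall>n. D n \<subseteq> topspace X) \<and> (\<forall>n. D (Suc n) \<subseteq> D n) \<and> (\<Inter>n. D n) = {}"
  then have D_sub: "\<And>n. D n \<subseteq> topspace X" and D_dec: "decseq D" and D_empty: "(\<Inter>n. D n) = {}"
    by (auto simp: decseq_Suc_iff)
  define V where "V n = (\<Union>x\<in>D n. U x)" for n
  have "(\<Inter>n. V n) = {}"
  proof (rule ccontr)
    assume "(\<Inter>n. V n) \<noteq> {}"
    then obtain y where y: "\<And>n. y \<in> V n" by blast
    obtain x where "x \<in> D 0" "y \<in> U x"
      using y[of 0] unfolding V_def by blast
    then have "y \<in> topspace X"
      using nhds[of x] D_sub openin_subset by blast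
    define P where "P = {x \<in> topspace X. y \<in> U x}"
    have leaves: "eventually (\<lambda>n. x \<notin> D n) sequentially" for x
    proof -
      obtain n where "x \<notin> D n" using D_empty by blast
      then show ?thesis
        using D_dec unfolding eventually_sequentially decseq_def by blast
    qed
    have "finite P"
      using point_finite[OF \<open>y \<in> topspace X\<close>] unfolding P_def .
    then have "eventually (\<lambda>n. \<forall>x\<in>P. x \<notin> D n) sequentially"
      by (rule eventually_ball_finite) (simp add: leaves)
    then obtain n where n: "\<forall>x\<in>P. x \<notin> D n"
      unfolding eventually_sequentially by blast
    obtain x where "x \<in> D n" "y \<in> U x"
      using y[of n] unfolding V_def by blast
    then show False
      using n D_sub unfolding P_def by blast
  qed
  moreover have "openin X (V n)" "D n \<subseteq> V n" for n
    using nhds D_sub unfolding V_def by blast+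
  moreover have "V (Suc n) \<subseteq> V n" for n
    using D_dec unfolding V_def decseq_Suc_iff by blast
  ultimately show "\<exists>V. (\<forall>n. openin X (V n)) \<and> (\<forall>n. V (Suc n) \<subseteq> V n) \<and>
      (\<forall>n. D n \<subseteq> V n) \<and> (\<Inter>n. V n) = {}"
    by blast
qed

context Metric_space
begin

definition uniformly_discrete :: "real \<Rightarrow> 'a set \<Rightarrow> bool" where
  "uniformly_discrete e T \<longleftrightarrow> T \<subseteq> M \<and> (\<forall>x\<in>T. \<forall>y\<in>T. d x y < e \<longrightarrow> x = y)"

lemma closedin_uniformly_discrete:
  assumes "uniformly_discrete e T" "e > 0"
  shows "closedin mtopology T"
proof -
  have "y \<notin> mtopology derived_set_of T" for y
  proof
    assume y: "y \<in> mtopology derived_set_of T"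
    have near: "\<exists>z. z \<noteq> y \<and> z \<in> T \<and> z \<in> mball y r" if "r > 0" for r
    proof -
      have "y \<in> mball y r" using y that by (simp add: in_derived_set_of)
      then show ?thesis using y openin_mball unfolding in_derived_set_of by blast
    qed
    obtain z where z: "z \<noteq> y" "z \<in> T" "z \<in> mball y (e / 2)"
      using near[of "e / 2"] \<open>e > 0\<close> by auto
    then have "0 < d y z"
      using assms(1) unfolding uniformly_discrete_def by auto
    then obtain z' where z': "z' \<noteq> y" "z' \<in> T" "z' \<in> mball y (d y z)"
      using near by blast
    have "d z z' \<le> d z y + d y z'"
      using z z' by (intro triangle) auto
    also have "\<dots> < e"
      using z z' commute[of z y] by auto
    finally have "z = z'"
      using assms(1) z z' unfolding uniformly_discrete_def by blast
    then show False
      using z' by simp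
  qed
  then show ?thesis
    using assms(1) unfolding closedin_contains_derived_set uniformly_discrete_def by auto
qed

lemma scattered_subspace_radius:
  assumes "scattered_space (subtopology mtopology A)" "A \<subseteq> M"
  obtains \<rho> where "\<And>x. x \<in> A \<Longrightarrow> \<rho> x > 0"
    and "\<And>x y. x \<in> A \<Longrightarrow> y \<in> A \<Longrightarrow> d x y < \<rho> x \<Longrightarrow> d x y < \<rho> y \<Longrightarrow> x = y"
proof -
  obtain R where "antisym R" and R_nhds: "\<And>x. x \<in> A \<Longrightarrow>
      \<exists>U. openin (subtopology mtopology A) U \<and> x \<in> U \<and> U \<subseteq> {z. (z, x) \<in> R}"
    using scattered_space_antisym_nhds[OF assms(1)] assms(2)
    by (metis inf.absorb2 topspace_mtopology topspace_subtopology)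
  have "\<exists>r>0. \<forall>z\<in>A. d x z < r \<longrightarrow> (z, x) \<in> R" if x: "x \<in> A" for x
  proof -
    obtain V where "openin mtopology V" "x \<in> V" and V: "V \<inter> A \<subseteq> {z. (z, x) \<in> R}"
      using R_nhds[OF x] unfolding openin_subtopology by blast
    then obtain r where "r > 0" "mball x r \<subseteq> V"
      using openin_mtopology by blast
    then show ?thesis
      using V x assms(2) by (intro exI[of _ r]) (fastforce simp: subset_iff)
  qed
  then obtain \<rho> where \<rho>: "\<And>x. x \<in> A \<Longrightarrow> \<rho> x > 0 \<and> (\<forall>z\<in>A. d x z < \<rho> x \<longrightarrow> (z, x) \<in> R)"
    by metis
  show thesis
  proof (rule that)
    show "\<rho> x > 0" if "x \<in> A" for x
      using \<rho> that by blast
    show "x = y" if "x \<in> A" "y \<in> A" "d x y < \<rho> x" "d x y < \<rho> y" for x y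
      using \<rho>[OF that(1)] \<rho>[OF that(2)] that commute[of x y] \<open>antisym R\<close>
      unfolding antisym_def by metis
  qed
qed

lemma sigma_scattered_uniformly_discrete_cover:
  assumes "sigma_scattered mtopology"
  obtains T :: "nat \<Rightarrow> 'a set" and e
  where "M = (\<Union>i. T i)" "\<And>i. e i > 0" "\<And>i. uniformly_discrete (e i) (T i)"
proof -
  obtain A :: "nat \<Rightarrow> 'a set" where M_eq: "M = (\<Union>k. A k)"
    and scattered: "\<And>k. scattered_space (subtopology mtopology (A k))"
    using assms unfolding sigma_scattered_def by auto
  have "\<exists>\<rho>. (\<forall>x\<in>A k. \<rho> x > 0) \<and>
      (\<forall>x\<in>A k. \<forall>y\<in>A k. d x y < \<rho> x \<longrightarrow> d x y < \<rho> y \<longrightarrow> x = y)" for k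
  proof -
    have "A k \<subseteq> M" using M_eq by blast
    then show ?thesis by (rule scattered_subspace_radius[OF scattered]) blast
  qed
  then obtain \<rho> where \<rho>_pos: "\<And>k x. x \<in> A k \<Longrightarrow> \<rho> k x > 0"
    and \<rho>_sep: "\<And>k x y. x \<in> A k \<Longrightarrow> y \<in> A k \<Longrightarrow> d x y < \<rho> k x \<Longrightarrow> d x y < \<rho> k y \<Longrightarrow> x = y"
    by metis
  define \<epsilon> :: "nat \<Rightarrow> real" where "\<epsilon> n = inverse (Suc n)" for n
  define T where "T i = (case prod_decode i of (k, n) \<Rightarrow> {x \<in> A k. \<epsilon> n \<le> \<rho> k x})" for i
  show thesis
  proof (rule that)
    show "M = (\<Union>i. T i)"
    proof
      show "M \<subseteq> (\<Union>i. T i)"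
      proof
        fix x assume "x \<in> M"
        then obtain k where "x \<in> A k" using M_eq by blast
        then obtain n where "\<epsilon> n < \<rho> k x"
          using \<rho>_pos reals_Archimedean unfolding \<epsilon>_def by blast
        then have "x \<in> T (prod_encode (k, n))"
          using \<open>x \<in> A k\<close> unfolding T_def by simp
        then show "x \<in> (\<Union>i. T i)" by blast
      qed
      show "(\<Union>i. T i) \<subseteq> M"
        using M_eq unfolding T_def by (auto split: prod.splits)
    qed
    show "\<epsilon> (snd (prod_decode i)) > 0" for i
      unfolding \<epsilon>_def by simp
    show "uniformly_discrete (\<epsilon> (snd (prod_decode i))) (T i)" for i
      using M_eq \<rho>_sep unfolding uniformly_discrete_def T_def
      by (fastforce split: prod.splits)
  qed
qed

lemma uniformly_discrete_cover_point_finite_nhds: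
  fixes T :: "nat \<Rightarrow> 'a set"
  assumes M_eq: "M = (\<Union>i. T i)" and e_pos: "\<And>i. e i > 0"
    and discrete: "\<And>i. uniformly_discrete (e i) (T i)"
  obtains U where "\<And>x. x \<in> M \<Longrightarrow> openin mtopology (U x) \<and> x \<in> U x"
    and "\<And>y. y \<in> M \<Longrightarrow> finite {x \<in> M. y \<in> U x}"
proof -
  define ix where "ix x = (LEAST i. x \<in> T i)" for x
  have ix: "x \<in> T (ix x)" if "x \<in> M" for x
  proof -
    obtain i where "x \<in> T i" using M_eq \<open>x \<in> M\<close> by blast
    then show ?thesis unfolding ix_def by (rule LeastI)
  qed
  have before_ix: "x \<notin> T l" if "l < ix x" for x l
    using that not_less_Least unfolding ix_def by blast
  \<comment> \<open>Removing the earlier T l makes y \<in> U x force ix x \<le> ix y.\<close>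
  define U where "U x = mball x (e (ix x) / 2) - (\<Union>l<ix x. T l)" for x
  have "closedin mtopology (\<Union>l<ix x. T l)" for x
    using closedin_uniformly_discrete[OF discrete e_pos] by (force intro: closedin_Union)
  then have "openin mtopology (U x)" for x
    unfolding U_def by (simp add: openin_diff)
  moreover have "x \<in> U x" if "x \<in> M" for x
    using that e_pos[of "ix x"] before_ix[of _ x] unfolding U_def by simp
  moreover have "finite {x \<in> M. y \<in> U x}" if "y \<in> M" for y
  proof -
    let ?P = "{x \<in> M. y \<in> U x}"
    have "ix ` ?P \<subseteq> {..ix y}"
      using ix[OF \<open>y \<in> M\<close>] unfolding U_def by (auto simp: not_le)
    moreover have "inj_on ix ?P"
    proof (rule inj_onI)
      fix x x' assume "x \<in> ?P" "x' \<in> ?P" "ix x = ix x'"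
      then have "d x x' < e (ix x)"
        using triangle[of x y x'] commute[of y x'] \<open>y \<in> M\<close> unfolding U_def by fastforce
      then show "x = x'"
        using discrete[of "ix x"] ix \<open>x \<in> ?P\<close> \<open>x' \<in> ?P\<close> \<open>ix x = ix x'\<close>
        unfolding uniformly_discrete_def by fastforce
    qed
    ultimately show ?thesis
      by (metis finite_atMost finite_imageD finite_subset)
  qed
  ultimately show thesis using that[of U] by blast
qed

end

theorem proposition4p1:
  fixes X :: "'a topology"
  assumes "metrizable_space X" and "sigma_scattered X"
  shows "delta_space X"
proof -
  obtain M d where "Metric_space M d" and X: "X = Metric_space.mtopology M d"
    using assms(1) unfolding metrizable_space_def by blast
  interpret Metric_space M d by fact
  obtain T :: "nat \<Rightarrow> 'a set" and e
    where "M = (\<Union>i. T i)" "\<And>i. e i > 0" "\<And>i. uniformly_discrete (e i) (T i)"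
    using sigma_scattered_uniformly_discrete_cover assms(2) X by blast
  then obtain U where U_nhds: "\<And>x. x \<in> M \<Longrightarrow> openin mtopology (U x) \<and> x \<in> U x"
    and U_finite: "\<And>y. y \<in> M \<Longrightarrow> finite {x \<in> M. y \<in> U x}"
    by (rule uniformly_discrete_cover_point_finite_nhds) blast
  have "delta_space mtopology"
    by (rule delta_space_if_point_finite_nhds[where U = U]) (simp_all add: U_nhds U_finite)
  then show ?thesis
    unfolding X .
qed

end
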